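(* Let $H$ be a Mealy machine from $X$ to $Y$ and $M$ a Mealy machine from $X$ to $Z$ such that for all $\overline{x},\overline{x}'\in X^*$, $\lambda_H(\overline{x})=\lambda_H(\overline{x}')$ implies $\lambda_M(\overline{x})=\lambda_M(\overline{x}')$. Define the observation machine $N$ from $Y$ to $Z$ as follows: $S_N$ is the set of pairs $(s_H,s_M)\in S_H\times S_M$ such that $\delta_H(\overline{x})=s_H$ and $\delta_M(\overline{x})=s_M$ for some $\overline{x}\in X^*$; $r_N=(r_H,r_M)$; for $(s_H,s_M)\in S_N$ and $y\in Y$ let $V=\{x\in X:\lambda_H(s_H,x)=y\}$; if $V=\emptyset$ then $((s_H,s_M),y)\notin D_N$; otherwise $((s_H,s_M),y)\in D_N$, $\lambda_N((s_H,s_M),y)$ is the common value of $\lambda_M(s_M,x)$ for $x\in V$, and $\Delta_N((s_H,s_M),y)=\{(\delta_H(s_H,x),\delta_M(s_M,x)):x\in V\}$. Then $N$ is well defined, and a Mealy machine $T$ from $Y$ to $Z$ satisfies $T\circ H\equiv M$ if and only if $T$ implements $N$.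
   Context: A Mealy machine from $X$ to $Y$ is a tuple $(X,Y,S,\delta,\lambda,r)$ with $\delta:S\times X\to S$, $\lambda:S\times X\to Y$ total; $\delta(\overline{x}),\lambda(\overline{x})$ denote the state reached and output word produced on input $\overline{x}$ from $r$. $T\circ H$ is the cascade: states $S_H\times S_T$, initial $(r_H,r_T)$, and with $y=\lambda_H(s_H,x)$, $\delta((s_H,s_T),x)=(\delta_H(s_H,x),\delta_T(s_T,y))$, $\lambda((s_H,s_T),x)=\lambda_T(s_T,y)$; $\equiv$ means same output on every input word. An observation machine (OM) from $Y$ to $Z$ is a tuple $(Y,Z,S,D,\Delta,\lambda,r)$ with $D\subseteq S\times Y$, $\Delta:D\to 2^S\setminus\{\emptyset\}$, $\lambda:D\to Z$. A run on $y_0\dots y_n$ from $s_0$ is $s_0,y_0,z_0,s_1,\dots,s_{n+1}$ with $(s_i,y_i)\in D$, $s_{i+1}\in\Delta(s_i,y_i)$, $z_i=\lambda(s_i,y_i)$; $\Omega_N$ is the set of words having a run from $r$; when all runs from $r$ on each $\overline{y}\in\Omega_N$ have the same output $\lambda_N(\overline{y})$, a Mealy machine $T$ implements $N$ if $\lambda_T(\overline{y})=\lambda_N(\overline{y})$ for all $\overline{y}\in\Omega_N$. *)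

theory Defs
  imports Main
begin

text \<open>A Mealy machine with state type 's (the state set S is the whole type),
  input alphabet 'x and output alphabet 'y; transition and output functions are total.\<close>
record ('s, 'x, 'y) mealy =
  m_init  :: 's
  m_trans :: "'s \<Rightarrow> 'x \<Rightarrow> 's"
  m_out   :: "'s \<Rightarrow> 'x \<Rightarrow> 'y"

fun mstate_from :: "('s, 'x, 'y) mealy \<Rightarrow> 's \<Rightarrow> 'x list \<Rightarrow> 's" where
  "mstate_from M s [] = s"
| "mstate_from M s (x # xs) = mstate_from M (m_trans M s x) xs"

fun mouts_from :: "('s, 'x, 'y) mealy \<Rightarrow> 's \<Rightarrow> 'x list \<Rightarrow> 'y list" where
  "mouts_from M s [] = []"
| "mouts_from M s (x # xs) = m_out M s x # mouts_from M (m_trans M s x) xs"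

definition mstate :: "('s, 'x, 'y) mealy \<Rightarrow> 'x list \<Rightarrow> 's" where
  "mstate M xs = mstate_from M (m_init M) xs"

definition mouts :: "('s, 'x, 'y) mealy \<Rightarrow> 'x list \<Rightarrow> 'y list" where
  "mouts M xs = mouts_from M (m_init M) xs"

definition cascade :: "('st, 'y, 'z) mealy \<Rightarrow> ('sh, 'x, 'y) mealy \<Rightarrow> ('sh \<times> 'st, 'x, 'z) mealy" where
  "cascade T H = \<lparr> m_init = (m_init H, m_init T),
     m_trans = (\<lambda>(sh, st) x. (m_trans H sh x, m_trans T st (m_out H sh x))),
     m_out = (\<lambda>(sh, st) x. m_out T st (m_out H sh x)) \<rparr>"

definition mealy_equiv :: "('s1, 'x, 'y) mealy \<Rightarrow> ('s2, 'x, 'y) mealy \<Rightarrow> bool" where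
  "mealy_equiv A B \<longleftrightarrow> (\<forall>xs. mouts A xs = mouts B xs)"

text \<open>Delta and lambda are total functions in HOL but only meaningful on om_dom.\<close>
record ('s, 'y, 'z) om =
  om_states :: "'s set"
  om_dom    :: "('s \<times> 'y) set"
  om_Delta  :: "'s \<Rightarrow> 'y \<Rightarrow> 's set"
  om_out    :: "'s \<Rightarrow> 'y \<Rightarrow> 'z"
  om_init   :: 's

definition om_wf :: "('s, 'y, 'z) om \<Rightarrow> bool" where
  "om_wf N \<longleftrightarrow> om_init N \<in> om_states N
     \<and> om_dom N \<subseteq> om_states N \<times> UNIV
     \<and> (\<forall>(s, y) \<in> om_dom N. om_Delta N s y \<noteq> {} \<and> om_Delta N s y \<subseteq> om_states N)"

fun om_run :: "('s, 'y, 'z) om \<Rightarrow> 's \<Rightarrow> 'y list \<Rightarrow> 'z list \<Rightarrow> bool" where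
  "om_run N s [] zs = (zs = [])"
| "om_run N s (y # ys) zs =
     ((s, y) \<in> om_dom N \<and>
      (\<exists>s' \<in> om_Delta N s y. \<exists>zs'. zs = om_out N s y # zs' \<and> om_run N s' ys zs'))"

definition om_Omega :: "('s, 'y, 'z) om \<Rightarrow> 'y list set" where
  "om_Omega N = {ys. \<exists>zs. om_run N (om_init N) ys zs}"

definition om_deterministic :: "('s, 'y, 'z) om \<Rightarrow> bool" where
  "om_deterministic N \<longleftrightarrow>
     (\<forall>ys zs zs'. om_run N (om_init N) ys zs \<and> om_run N (om_init N) ys zs' \<longrightarrow> zs = zs')"

definition om_outs :: "('s, 'y, 'z) om \<Rightarrow> 'y list \<Rightarrow> 'z list" where
  "om_outs N ys = (THE zs. om_run N (om_init N) ys zs)"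

definition implements :: "('st, 'y, 'z) mealy \<Rightarrow> ('s, 'y, 'z) om \<Rightarrow> bool" where
  "implements T N \<longleftrightarrow> (\<forall>ys \<in> om_Omega N. mouts T ys = om_outs N ys)"

definition obs_machine :: "('sh, 'x, 'y) mealy \<Rightarrow> ('sm, 'x, 'z) mealy \<Rightarrow> ('sh \<times> 'sm, 'y, 'z) om" where
  "obs_machine H M = \<lparr>
     om_states = {(sh, sm). \<exists>xs. mstate H xs = sh \<and> mstate M xs = sm},
     om_dom = {((sh, sm), y). (sh, sm) \<in> {(sh, sm). \<exists>xs. mstate H xs = sh \<and> mstate M xs = sm}
                               \<and> {x. m_out H sh x = y} \<noteq> {}},
     om_Delta = (\<lambda>(sh, sm) y. {(m_trans H sh x, m_trans M sm x) | x. m_out H sh x = y}),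
     om_out = (\<lambda>(sh, sm) y. m_out M sm (SOME x. m_out H sh x = y)),
     om_init = (m_init H, m_init M) \<rparr>"

end

theory Submission
  imports Defs
begin

text \<open>A run of N on a word ys picks, letter by letter, an input with the prescribed
  H-output, so the runs from the initial state correspond to the input words xs with
  lambda_H(xs) = ys. Since the H-output of a word determines its M-output, the output N
  assigns to a letter does not depend on the input picked, and the run outputs lambda_M(xs).
  Hence Omega_N is the image of lambda_H and lambda_N(lambda_H(xs)) = lambda_M(xs), so T
  implements N exactly when lambda_T(lambda_H(xs)) = lambda_M(xs) for all xs, i.e. when
  T \<circ> H \<equiv> M.\<close>

lemma mstate_from_append:
  "mstate_from M s (xs @ ys) = mstate_from M (mstate_from M s xs) ys"
  by (induction xs arbitrary: s) auto

lemma mouts_from_append: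
  "mouts_from M s (xs @ ys) = mouts_from M s xs @ mouts_from M (mstate_from M s xs) ys"
  by (induction xs arbitrary: s) auto

lemma mstate_snoc: "mstate M (xs @ [x]) = m_trans M (mstate M xs) x"
  by (simp add: mstate_def mstate_from_append)

lemma mouts_snoc: "mouts M (xs @ [x]) = mouts M xs @ [m_out M (mstate M xs) x]"
  by (simp add: mouts_def mstate_def mouts_from_append)

lemma mouts_from_eq_Nil_iff: "mouts_from M s xs = [] \<longleftrightarrow> xs = []"
  by (cases xs) auto

lemma mouts_from_cascade:
  "mouts_from (cascade T H) (sh, st) xs = mouts_from T st (mouts_from H sh xs)"
  by (induction xs arbitrary: sh st) (auto simp: cascade_def)

lemma m_init_cascade: "m_init (cascade T H) = (m_init H, m_init T)"
  by (simp add: cascade_def)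

lemma mouts_cascade: "mouts (cascade T H) xs = mouts T (mouts H xs)"
  by (simp add: mouts_def m_init_cascade mouts_from_cascade)

lemma om_states_obs_machine:
  "p \<in> om_states (obs_machine H M) \<longleftrightarrow> (\<exists>xs. p = (mstate H xs, mstate M xs))"
  by (auto simp: obs_machine_def)

lemma om_Delta_obs_machine:
  "om_Delta (obs_machine H M) (mstate H xs, mstate M xs) y =
    {(mstate H (xs @ [x]), mstate M (xs @ [x])) | x. m_out H (mstate H xs) x = y}"
  by (simp add: obs_machine_def mstate_snoc)

lemma om_wf_obs_machine: "om_wf (obs_machine H M)"
  unfolding om_wf_def
proof (intro conjI ballI)
  show "om_init (obs_machine H M) \<in> om_states (obs_machine H M)"
    unfolding om_states_obs_machine by (rule exI[of _ "[]"]) (simp add: obs_machine_def mstate_def)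
  show "om_dom (obs_machine H M) \<subseteq> om_states (obs_machine H M) \<times> UNIV"
    by (auto simp: obs_machine_def)
next
  fix q assume "q \<in> om_dom (obs_machine H M)"
  then obtain xs y x where "q = ((mstate H xs, mstate M xs), y)" and "m_out H (mstate H xs) x = y"
    by (auto simp: obs_machine_def)
  then show "case q of (s, y) \<Rightarrow>
      om_Delta (obs_machine H M) s y \<noteq> {} \<and> om_Delta (obs_machine H M) s y \<subseteq> om_states (obs_machine H M)"
    by (auto simp: om_Delta_obs_machine om_states_obs_machine)
qed

locale output_determined =
  fixes H :: "('sh, 'x, 'y) mealy" and M :: "('sm, 'x, 'z) mealy"
  assumes mouts_determined: "mouts H xs = mouts H xs' \<Longrightarrow> mouts M xs = mouts M xs'"
begin

abbreviation N :: "('sh \<times> 'sm, 'y, 'z) om" where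
  "N \<equiv> obs_machine H M"

lemma m_out_determined:
  assumes "m_out H (mstate H xs) x = m_out H (mstate H xs) x'"
  shows "m_out M (mstate M xs) x = m_out M (mstate M xs) x'"
  using mouts_determined[of "xs @ [x]" "xs @ [x']"] assms by (simp add: mouts_snoc)

lemma om_out_obs_machine:
  assumes "m_out H (mstate H xs) x = y"
  shows "om_out N (mstate H xs, mstate M xs) y = m_out M (mstate M xs) x"
proof -
  have "m_out H (mstate H xs) (SOME x. m_out H (mstate H xs) x = y) = y"
    using assms by (rule someI)
  with assms have "m_out M (mstate M xs) (SOME x. m_out H (mstate H xs) x = y) = m_out M (mstate M xs) x"
    by (intro m_out_determined) simp
  then show ?thesis
    by (simp add: obs_machine_def)
qed

lemma om_run_obs_machine_Cons:
  "om_run N (mstate H xs, mstate M xs) (y # ys) zs \<longleftrightarrow>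
    (\<exists>x zs'. m_out H (mstate H xs) x = y \<and> zs = m_out M (mstate M xs) x # zs'
       \<and> om_run N (mstate H (xs @ [x]), mstate M (xs @ [x])) ys zs')"
  (is "?run \<longleftrightarrow> ?step")
proof
  assume ?run
  then obtain x zs' where x: "m_out H (mstate H xs) x = y"
    and "zs = om_out N (mstate H xs, mstate M xs) y # zs'"
    and "om_run N (mstate H (xs @ [x]), mstate M (xs @ [x])) ys zs'"
    by (auto simp: om_Delta_obs_machine)
  with om_out_obs_machine[OF x] show ?step by blast
next
  assume ?step
  then obtain x zs' where x: "m_out H (mstate H xs) x = y"
    and "zs = m_out M (mstate M xs) x # zs'"
    and "om_run N (mstate H (xs @ [x]), mstate M (xs @ [x])) ys zs'"
    by blast
  moreover have "((mstate H xs, mstate M xs), y) \<in> om_dom N"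
    using x by (auto simp: obs_machine_def)
  ultimately show ?run
    using om_out_obs_machine[OF x] by (auto simp: om_Delta_obs_machine)
qed

lemma om_run_obs_machine_iff:
  "om_run N (mstate H xs, mstate M xs) ys zs \<longleftrightarrow>
    (\<exists>xs'. ys = mouts_from H (mstate H xs) xs' \<and> zs = mouts_from M (mstate M xs) xs')"
proof (induction ys arbitrary: xs zs)
  case Nil
  show ?case
    by (simp add: eq_commute[of "[]"] mouts_from_eq_Nil_iff)
next
  case (Cons y ys)
  let ?s = "mstate H xs" and ?t = "mstate M xs"
  have "(\<exists>xs'. y # ys = mouts_from H ?s xs' \<and> zs = mouts_from M ?t xs') \<longleftrightarrow>
    (\<exists>x xs'. m_out H ?s x = y \<and> ys = mouts_from H (m_trans H ?s x) xs'
       \<and> zs = m_out M ?t x # mouts_from M (m_trans M ?t x) xs')" (is "?word \<longleftrightarrow> ?letter")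
  proof
    assume ?word
    then obtain w where "y # ys = mouts_from H ?s w" "zs = mouts_from M ?t w"
      by blast
    then show ?letter by (cases w) fastforce+
  next
    assume ?letter
    then obtain x xs' where "m_out H ?s x = y" "ys = mouts_from H (m_trans H ?s x) xs'"
      "zs = m_out M ?t x # mouts_from M (m_trans M ?t x) xs'"
      by blast
    then show ?word by (intro exI[of _ "x # xs'"]) simp
  qed
  then show ?case
    unfolding om_run_obs_machine_Cons Cons.IH by (auto simp: mstate_snoc)
qed

lemma om_run_obs_machine_init_iff:
  "om_run N (om_init N) ys zs \<longleftrightarrow> (\<exists>xs. ys = mouts H xs \<and> zs = mouts M xs)"
  using om_run_obs_machine_iff[of "[]" ys zs]
  by (simp add: obs_machine_def mstate_def mouts_def)

lemma om_Omega_obs_machine: "om_Omega N = range (mouts H)"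
  by (auto simp: om_Omega_def om_run_obs_machine_init_iff)

lemma om_deterministic_obs_machine: "om_deterministic N"
  unfolding om_deterministic_def om_run_obs_machine_init_iff by (metis mouts_determined)

lemma om_outs_obs_machine: "om_outs N (mouts H xs) = mouts M xs"
  unfolding om_outs_def om_run_obs_machine_init_iff
  by (rule the_equality) (blast, metis mouts_determined)

lemma cascade_equiv_iff_implements:
  "mealy_equiv (cascade T H) M \<longleftrightarrow> implements T N"
  by (simp add: mealy_equiv_def implements_def om_Omega_obs_machine mouts_cascade
      om_outs_obs_machine)

end

theorem proposition2:
  fixes H :: "('sh, 'x, 'y) mealy" and M :: "('sm, 'x, 'z) mealy"
  assumes "\<forall>xs xs'. mouts H xs = mouts H xs' \<longrightarrow> mouts M xs = mouts M xs'"
  shows "om_wf (obs_machine H M)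
    \<and> (\<forall>p \<in> om_states (obs_machine H M). \<forall>y x x'.
          m_out H (fst p) x = y \<and> m_out H (fst p) x' = y \<longrightarrow> m_out M (snd p) x = m_out M (snd p) x')
    \<and> om_deterministic (obs_machine H M)
    \<and> (\<forall>T :: ('st, 'y, 'z) mealy.
          mealy_equiv (cascade T H) M \<longleftrightarrow> implements T (obs_machine H M))"
proof -
  interpret output_determined H M
    using assms by unfold_locales blast
  have "\<forall>p \<in> om_states N. \<forall>y x x'.
      m_out H (fst p) x = y \<and> m_out H (fst p) x' = y \<longrightarrow> m_out M (snd p) x = m_out M (snd p) x'"
    by (auto simp: om_states_obs_machine) (metis m_out_determined)
  then show ?thesis
    by (simp add: om_wf_obs_machine om_deterministic_obs_machine cascade_equiv_iff_implements)
qed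

end
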